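(* Assume AM defends every real machine, i.e. $d_r=e_r$ for all $r\in\mathcal M$. For each $m\in\mathcal M$ let $\pi^{(m)}$ be the naive deterministic AM strategy that always creates a sandbox of type $m$ (i.e. $\pi^{(m)}_m=1$ and $\pi^{(m)}_{m'}=0$ for $m'\ne m$), and let $v(m)=1-\max_{\rho\in[0,1]^{\mathcal M}}u_M(\pi^{(m)},\rho)$, which equals $u_{AM}(\pi^{(m)},\rho)$ for every best response $\rho$ of M to $\pi^{(m)}$. If $m^*\in\arg\max_{m\in\mathcal M}e_m$ (the strategy called Majority), then $v(m^* )\ge v(m)$ for all $m\in\mathcal M$; that is, Majority is AM-optimal among naive deterministic AM strategies.
   Context: Let $\mathcal M$ be a finite nonempty set of machine (environment) types. Let $e\in[0,1]^{\mathcal M}$ with $\sum_{r\in\mathcal M}e_r=1$ ($e_r$ is the fraction of all real machines that are of type $r$), and $d\in[0,1]^{\mathcal M}$ with $0\le d_r\le e_r$ ($d_r$ is the fraction of all real machines that are of type $r$ and defended by the anti-malware AM); put $D=\sum_{r}d_r$. An AM strategy $\pi$ assigns to each real machine type $r\in\mathcal M$ a vector $\pi^r\in[0,1]^{\mathcal M}$ with $\sum_{m}\pi^r_m\le 1$ ($\pi^r_m$ is the probability that AM creates a sandbox of type $m$ on a defended real machine of type $r$; with probability $1-\sum_m\pi^r_m$ no sandbox is created). AM's strategy is naive if $\pi^r$ does not depend on $r$; then we write $\pi_m$ for $\pi^r_m$. A malware (M) strategy is a vector $\rho\in[0,1]^{\mathcal M}$ ($\rho_m$ is the probability M attacks when it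 perceives environment $m$). The utilities are $$u_M(\pi,\rho)=\sum_{r\in\mathcal M}\Big[(e_r-d_r)\rho_r+d_r\Big(1-\sum_{m\in\mathcal M}\pi^r_m\rho_m\Big)\rho_r\Big],$$ $$u_{AM}(\pi,\rho)=\sum_{r\in\mathcal M}d_r\Big[\sum_{m\in\mathcal M}\big(\pi^r_m\rho_m+\pi^r_m(1-\rho_m)(1-\rho_r)\big)+\Big(1-\sum_{m\in\mathcal M}\pi^r_m\Big)(1-\rho_r)\Big].$$ A best response of M to $\pi$ is any $\rho\in\arg\max_{\hat\rho\in[0,1]^{\mathcal M}}u_M(\pi,\hat\rho)$. A pair $(\pi,\rho)$ with $\rho$ a best response to $\pi$ is an equilibrium; it is AM-optimal within a class of AM strategies if $\pi$ lies in the class and $u_{AM}(\pi,\rho)\ge u_{AM}(\pi',\rho')$ for every equilibrium $(\pi',\rho')$ with $\pi'$ in the class. *)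

theory Defs
  imports Complex_Main
begin

text \<open>An AM strategy is
  \<open>p :: 'a \<Rightarrow> 'a \<Rightarrow> real\<close> with \<open>p r m\<close> the probability of creating a sandbox of
  type m on a defended real machine of type r. Only values on \<open>MT\<close> matter.\<close>

definition u_M :: "'a set \<Rightarrow> ('a \<Rightarrow> real) \<Rightarrow> ('a \<Rightarrow> real) \<Rightarrow> ('a \<Rightarrow> 'a \<Rightarrow> real) \<Rightarrow> ('a \<Rightarrow> real) \<Rightarrow> real" where
  "u_M MT e d p rho =
     (\<Sum>r\<in>MT. (e r - d r) * rho r + d r * (1 - (\<Sum>m\<in>MT. p r m * rho m)) * rho r)"

definition u_AM :: "'a set \<Rightarrow> ('a \<Rightarrow> real) \<Rightarrow> ('a \<Rightarrow> 'a \<Rightarrow> real) \<Rightarrow> ('a \<Rightarrow> real) \<Rightarrow> real" where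
  "u_AM MT d p rho =
     (\<Sum>r\<in>MT. d r * ((\<Sum>m\<in>MT. p r m * rho m + p r m * (1 - rho m) * (1 - rho r))
                     + (1 - (\<Sum>m\<in>MT. p r m)) * (1 - rho r)))"

definition M_strats :: "'a set \<Rightarrow> ('a \<Rightarrow> real) set" where
  "M_strats MT = {rho. \<forall>m\<in>MT. 0 \<le> rho m \<and> rho m \<le> 1}"

definition best_response :: "'a set \<Rightarrow> ('a \<Rightarrow> real) \<Rightarrow> ('a \<Rightarrow> real) \<Rightarrow> ('a \<Rightarrow> 'a \<Rightarrow> real) \<Rightarrow> ('a \<Rightarrow> real) \<Rightarrow> bool" where
  "best_response MT e d p rho \<longleftrightarrow>
     rho \<in> M_strats MT \<and> (\<forall>rho'\<in>M_strats MT. u_M MT e d p rho' \<le> u_M MT e d p rho)"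

definition pi_det :: "'a \<Rightarrow> 'a \<Rightarrow> 'a \<Rightarrow> real" where
  "pi_det m = (\<lambda>r m'. if m' = m then 1 else 0)"

text \<open>v(m) = 1 - max over rho of u_M(pi^(m), rho); the max exists (continuous
  function on a compact set), so it coincides with the supremum.\<close>
definition v_val :: "'a set \<Rightarrow> ('a \<Rightarrow> real) \<Rightarrow> ('a \<Rightarrow> real) \<Rightarrow> 'a \<Rightarrow> real" where
  "v_val MT e d m = 1 - (SUP rho\<in>M_strats MT. u_M MT e d (pi_det m) rho)"

end

theory Submission
  imports Defs
begin

text \<open>Against the deterministic sandbox of type \<open>m\<close> on fully defended machines the malware
  gets \<open>(1 - \<rho>\<^sub>m) \<Sum>\<^sub>r e\<^sub>r \<rho>\<^sub>r\<close>, and the game is constant-sum: AM gets one minus that.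
  Attacking on every type other than \<open>m\<close> is optimal, so with \<open>y = 1 - \<rho>\<^sub>m\<close> the malware
  maximises \<open>y - e\<^sub>m y\<^sup>2\<close> over \<open>[0,1]\<close>; the maximum \<open>malware_value (e\<^sub>m)\<close> is antitone
  in \<open>e\<^sub>m\<close>, so AM's value \<open>1 - malware_value (e\<^sub>m)\<close> is largest for the majority type.\<close>

definition malware_value :: "real \<Rightarrow> real" where
  "malware_value x = (if x \<le> 1/2 then 1 - x else 1 / (4*x))"

lemma malware_value_antimono:
  assumes "0 \<le> a" "a \<le> b"
  shows "malware_value b \<le> malware_value a"
proof (cases "b \<le> 1/2")
  case True
  then show ?thesis using assms unfolding malware_value_def by auto
next
  case b: False
  show ?thesis
  proof (cases "a \<le> 1/2")
    case True
    have "1/(4*b) \<le> 1/2" using b by (simp add: field_simps)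
    moreover have "1/2 \<le> 1 - a" using True by simp
    ultimately have "1/(4*b) \<le> 1 - a" by linarith
    then show ?thesis using True b unfolding malware_value_def by simp
  next
    case False
    have "1/(4*b) \<le> 1/(4*a)" using False assms by (intro divide_left_mono) auto
    then show ?thesis using False b unfolding malware_value_def by auto
  qed
qed

lemma quadratic_le_malware_value:
  assumes x: "0 \<le> x" and y: "0 \<le> y" "y \<le> 1"
  shows "y - x * y\<^sup>2 \<le> malware_value x"
proof (cases "x \<le> 1/2")
  case True
  have "x * (1 + y) \<le> x * 2" using x y by (intro mult_left_mono) auto
  then have "0 \<le> (1 - y) * (1 - x * (1 + y))" using True y by simp
  then show ?thesis using True unfolding malware_value_def by (simp add: power2_eq_square algebra_simps)
next
  case False
  have "0 \<le> (2*x*y - 1)\<^sup>2 / (4*x)" using False by simp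
  also have "\<dots> = 1/(4*x) - (y - x * y\<^sup>2)" using False by (simp add: field_simps power2_eq_square)
  finally show ?thesis using False unfolding malware_value_def by simp
qed

lemma malware_value_attained:
  assumes "0 \<le> x" "x \<le> 1"
  obtains c where "0 \<le> c" "c \<le> 1" "(1 - c) * (x * c + (1 - x)) = malware_value x"
proof
  let ?c = "if x \<le> 1/2 then 0 else 1 - 1/(2*x)"
  show "0 \<le> ?c" "?c \<le> 1" using assms by (auto simp: field_simps)
  show "(1 - ?c) * (x * ?c + (1 - x)) = malware_value x"
    using assms unfolding malware_value_def by (auto simp: field_simps)
qed

lemma sum_pi_det:
  assumes "finite MT" "m \<in> MT"
  shows "(\<Sum>m'\<in>MT. pi_det m r m' * f m') = f m"
proof -
  have "(\<Sum>m'\<in>MT. pi_det m r m' * f m') = (\<Sum>m'\<in>MT. if m' = m then f m' else 0)"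
    by (rule sum.cong) (auto simp: pi_det_def)
  also have "\<dots> = f m" using assms by (simp add: sum.delta)
  finally show ?thesis .
qed

lemma u_M_pi_det:
  assumes "finite MT" "m \<in> MT" "\<forall>r\<in>MT. d r = e r"
  shows "u_M MT e d (pi_det m) rho = (1 - rho m) * (\<Sum>r\<in>MT. e r * rho r)"
proof -
  have "u_M MT e d (pi_det m) rho = (\<Sum>r\<in>MT. (1 - rho m) * (e r * rho r))"
    unfolding u_M_def using assms sum_pi_det[OF assms(1,2), of _ rho]
    by (intro sum.cong) (simp_all add: algebra_simps)
  then show ?thesis by (simp add: sum_distrib_left)
qed

lemma u_AM_pi_det:
  assumes "finite MT" "m \<in> MT" "\<forall>r\<in>MT. d r = e r" "(\<Sum>r\<in>MT. e r) = 1"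
  shows "u_AM MT d (pi_det m) rho = 1 - u_M MT e d (pi_det m) rho"
proof -
  have "u_AM MT d (pi_det m) rho = (\<Sum>r\<in>MT. e r * (rho m + (1 - rho m) * (1 - rho r)))"
    unfolding u_AM_def
  proof (intro sum.cong refl)
    fix r assume r: "r \<in> MT"
    have "(\<Sum>m'\<in>MT. pi_det m r m' * rho m' + pi_det m r m' * (1 - rho m') * (1 - rho r))
        = rho m + (1 - rho m) * (1 - rho r)"
      using sum_pi_det[OF assms(1,2), of r rho]
        sum_pi_det[OF assms(1,2), of r "\<lambda>m'. (1 - rho m') * (1 - rho r)"]
      by (simp add: sum.distrib mult.assoc)
    moreover have "(\<Sum>m'\<in>MT. pi_det m r m') = 1"
      using sum_pi_det[OF assms(1,2), of r "\<lambda>_. 1"] by simp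
    ultimately show "d r * ((\<Sum>m'\<in>MT. pi_det m r m' * rho m' + pi_det m r m' * (1 - rho m') * (1 - rho r))
                     + (1 - (\<Sum>m'\<in>MT. pi_det m r m')) * (1 - rho r))
        = e r * (rho m + (1 - rho m) * (1 - rho r))"
      using assms(3) r by simp
  qed
  also have "\<dots> = (\<Sum>r\<in>MT. e r) - (1 - rho m) * (\<Sum>r\<in>MT. e r * rho r)"
    by (simp add: sum_distrib_left sum_subtractf[symmetric] algebra_simps)
  finally show ?thesis using assms u_M_pi_det[OF assms(1-3)] by simp
qed

lemma u_M_pi_det_le_malware_value:
  assumes fin: "finite MT" and m: "m \<in> MT" and de: "\<forall>r\<in>MT. d r = e r"
    and e01: "\<forall>r\<in>MT. 0 \<le> e r \<and> e r \<le> 1" and es: "(\<Sum>r\<in>MT. e r) = 1"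
    and rho: "rho \<in> M_strats MT"
  shows "u_M MT e d (pi_det m) rho \<le> malware_value (e m)"
proof -
  have r01: "\<forall>r\<in>MT. 0 \<le> rho r \<and> rho r \<le> 1" using rho by (simp add: M_strats_def)
  have "(\<Sum>r\<in>MT-{m}. e r * rho r) \<le> (\<Sum>r\<in>MT-{m}. e r)"
    using e01 r01 by (intro sum_mono) (simp add: mult_left_le)
  also have "\<dots> = 1 - e m" using es by (simp add: sum.remove[OF fin m])
  finally have S: "(\<Sum>r\<in>MT. e r * rho r) \<le> e m * rho m + (1 - e m)"
    by (simp add: sum.remove[OF fin m])
  define y where "y = 1 - rho m"
  have y: "0 \<le> y" "y \<le> 1" using r01 m y_def by auto
  have "u_M MT e d (pi_det m) rho = y * (\<Sum>r\<in>MT. e r * rho r)"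
    using u_M_pi_det[OF fin m de] y_def by simp
  also have "\<dots> \<le> y * (e m * rho m + (1 - e m))" using S y by (simp add: mult_left_mono)
  also have "\<dots> = y - e m * y\<^sup>2" by (simp add: y_def power2_eq_square algebra_simps)
  also have "\<dots> \<le> malware_value (e m)" using quadratic_le_malware_value e01 m y by simp
  finally show ?thesis .
qed

lemma u_M_pi_det_attains_malware_value:
  assumes fin: "finite MT" and m: "m \<in> MT" and de: "\<forall>r\<in>MT. d r = e r"
    and e01: "\<forall>r\<in>MT. 0 \<le> e r \<and> e r \<le> 1" and es: "(\<Sum>r\<in>MT. e r) = 1"
  obtains rho where "rho \<in> M_strats MT" "u_M MT e d (pi_det m) rho = malware_value (e m)"
proof -
  obtain c where c: "0 \<le> c" "c \<le> 1" "(1 - c) * (e m * c + (1 - e m)) = malware_value (e m)"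
    using malware_value_attained e01 m by blast
  define rho where "rho = (\<lambda>r. if r = m then c else (1::real))"
  have rho_m: "rho m = c" by (simp add: rho_def)
  have "(\<Sum>r\<in>MT-{m}. e r * rho r) = (\<Sum>r\<in>MT-{m}. e r)"
    by (intro sum.cong) (auto simp: rho_def)
  also have "\<dots> = 1 - e m" using es by (simp add: sum.remove[OF fin m])
  finally have "(\<Sum>r\<in>MT. e r * rho r) = e m * c + (1 - e m)"
    by (simp add: sum.remove[OF fin m] rho_m)
  then have "u_M MT e d (pi_det m) rho = malware_value (e m)"
    using u_M_pi_det[OF fin m de, of rho] c(3) rho_m by simp
  moreover have "rho \<in> M_strats MT" using c by (simp add: M_strats_def rho_def)
  ultimately show ?thesis using that by blast
qed

lemma SUP_u_M_pi_det:
  assumes "finite MT" "m \<in> MT" "\<forall>r\<in>MT. d r = e r"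
    and "\<forall>r\<in>MT. 0 \<le> e r \<and> e r \<le> 1" "(\<Sum>r\<in>MT. e r) = 1"
  shows "(SUP rho\<in>M_strats MT. u_M MT e d (pi_det m) rho) = malware_value (e m)"
proof (rule cSup_eq_maximum)
  obtain rho where "rho \<in> M_strats MT" "u_M MT e d (pi_det m) rho = malware_value (e m)"
    by (rule u_M_pi_det_attains_malware_value[OF assms])
  then show "malware_value (e m) \<in> u_M MT e d (pi_det m) ` M_strats MT"
    by (metis image_eqI)
next
  fix x assume "x \<in> u_M MT e d (pi_det m) ` M_strats MT"
  then obtain rho where "rho \<in> M_strats MT" "x = u_M MT e d (pi_det m) rho" by blast
  then show "x \<le> malware_value (e m)" using u_M_pi_det_le_malware_value[OF assms] by simp
qed

lemma SUP_best_response: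
  assumes "best_response MT e d p rho"
  shows "(SUP rho'\<in>M_strats MT. u_M MT e d p rho') = u_M MT e d p rho"
  using assms unfolding best_response_def by (intro cSup_eq_maximum) auto

theorem mainTheorem4:
  fixes MT :: "'a set" and e d :: "'a \<Rightarrow> real" and mstar :: 'a
  assumes "finite MT" and "MT \<noteq> {}"
    and "\<forall>r\<in>MT. 0 \<le> e r \<and> e r \<le> 1"
    and "(\<Sum>r\<in>MT. e r) = 1"
    and "\<forall>r\<in>MT. d r = e r"
    and "mstar \<in> MT" and "\<forall>m\<in>MT. e m \<le> e mstar"
  shows "(\<forall>m\<in>MT. v_val MT e d m \<le> v_val MT e d mstar)
       \<and> (\<forall>m\<in>MT. \<forall>rho rhostar.
             best_response MT e d (pi_det m) rho \<longrightarrow>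
             best_response MT e d (pi_det mstar) rhostar \<longrightarrow>
             u_AM MT d (pi_det m) rho \<le> u_AM MT d (pi_det mstar) rhostar)"
proof -
  have v_val: "v_val MT e d m = 1 - malware_value (e m)" if "m \<in> MT" for m
    unfolding v_val_def using SUP_u_M_pi_det[OF assms(1) that assms(5,3,4)] by simp
  have majority: "v_val MT e d m \<le> v_val MT e d mstar" if "m \<in> MT" for m
    using malware_value_antimono[of "e m" "e mstar"] assms(3,7) that v_val[OF that] v_val[OF assms(6)]
    by simp
  have u_AM_best_response: "u_AM MT d (pi_det m) rho = v_val MT e d m"
    if "m \<in> MT" "best_response MT e d (pi_det m) rho" for m rho
    using u_AM_pi_det[OF assms(1) that(1) assms(5,4)] SUP_best_response[OF that(2)]
    unfolding v_val_def by simp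
  show ?thesis
  proof (intro conjI ballI allI impI)
    fix m rho rhostar
    assume "m \<in> MT" "best_response MT e d (pi_det m) rho"
      "best_response MT e d (pi_det mstar) rhostar"
    then show "u_AM MT d (pi_det m) rho \<le> u_AM MT d (pi_det mstar) rhostar"
      using majority[of m] u_AM_best_response[of m rho] u_AM_best_response[OF assms(6), of rhostar]
      by simp
  qed (rule majority)
qed

end
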